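(* In $NOM$, writing $\phi\perp\!\!\!\perp\psi$ for $(\phi\rightarrow(\psi\rightarrow\phi))\wedge(\psi\rightarrow(\phi\rightarrow\psi))$, the following rules are derivable for all finite sequences $\Gamma,\Delta$ of formulas and all formulas $\phi,\psi,\chi$: from $\Gamma,\phi,\psi\vdash\phi$ and $\Gamma,\psi,\phi\vdash\psi$ infer $\Gamma\vdash\phi\perp\!\!\!\perp\psi$; from $\Gamma\vdash\phi\perp\!\!\!\perp\psi$ and $\Gamma,\phi,\psi,\Delta\vdash\chi$ infer $\Gamma,\psi,\phi,\Delta\vdash\chi$; from $\Gamma\vdash\phi\perp\!\!\!\perp\psi$ and $\Gamma,\psi,\phi,\Delta\vdash\chi$ infer $\Gamma,\phi,\psi,\Delta\vdash\chi$.
   Context: The propositional deductive system $NOM$: formulas are built from propositional letters using $\wedge$, $\rightarrow$, $\neg$. Sequents are $\phi_1,\ldots,\phi_n\vdash\psi$ ($n\ge0$) with antecedent a finite ordered sequence; commas denote concatenation. With $\Gamma$ a finite possibly empty sequence of formulas and $\phi,\psi,\chi$ formulas, the rules of $NOM$ are: (assumption) $\Gamma,\phi\vdash\phi$; (cut) $\Gamma\vdash\phi$, $\Gamma,\phi\vdash\psi$ $\Rightarrow$ $\Gamma\vdash\psi$; (paste) $\Gamma\vdash\phi$, $\Gamma\vdash\psi$ $\Rightarrow$ $\Gamma,\phi\vdash\psi$; (compatible exchange) $\Gamma,\phi,\psi\vdash\phi$, $\Gamma,\phi,\psi\vdash\chi$, $\Gamma,\psi,\phi\vdash\psi$ $\Rightarrow$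 $\Gamma,\psi,\phi\vdash\chi$; ($\wedge$-intro) $\Gamma\vdash\phi$, $\Gamma\vdash\psi$ $\Rightarrow$ $\Gamma\vdash\phi\wedge\psi$; ($\wedge$-elim) $\Gamma\vdash\phi\wedge\psi$ $\Rightarrow$ $\Gamma\vdash\phi$ and $\Rightarrow$ $\Gamma\vdash\psi$; ($\rightarrow$-intro) $\Gamma,\phi\vdash\psi$ $\Rightarrow$ $\Gamma\vdash\phi\rightarrow\psi$; ($\rightarrow$-elim) $\Gamma\vdash\phi\rightarrow\psi$ $\Rightarrow$ $\Gamma,\phi\vdash\psi$; (excluded middle) $\Gamma,\phi\vdash\psi$, $\Gamma,\neg\phi\vdash\psi$ $\Rightarrow$ $\Gamma\vdash\psi$; (explosion) $\Gamma\vdash\neg\phi$ $\Rightarrow$ $\Gamma,\phi\vdash\psi$. A rule schema is derivable if in every instance its conclusion can be derived from its premises using these rules. *)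

theory Defs
  imports Main
begin

datatype 'a form = Letter 'a | Conj "'a form" "'a form" | Imp "'a form" "'a form" | Neg "'a form"

type_synonym 'a sequent = "'a form list \<times> 'a form"

inductive_set NOM :: "'a sequent set \<Rightarrow> 'a sequent set" for H :: "'a sequent set" where
  hyp: "s \<in> H \<Longrightarrow> s \<in> NOM H"
| assumption: "(\<Gamma> @ [\<phi>], \<phi>) \<in> NOM H"
| cut: "(\<Gamma>, \<phi>) \<in> NOM H \<Longrightarrow> (\<Gamma> @ [\<phi>], \<psi>) \<in> NOM H \<Longrightarrow> (\<Gamma>, \<psi>) \<in> NOM H"
| paste: "(\<Gamma>, \<phi>) \<in> NOM H \<Longrightarrow> (\<Gamma>, \<psi>) \<in> NOM H \<Longrightarrow> (\<Gamma> @ [\<phi>], \<psi>) \<in> NOM H"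
| compat_exch: "(\<Gamma> @ [\<phi>, \<psi>], \<phi>) \<in> NOM H \<Longrightarrow> (\<Gamma> @ [\<phi>, \<psi>], \<chi>) \<in> NOM H
      \<Longrightarrow> (\<Gamma> @ [\<psi>, \<phi>], \<psi>) \<in> NOM H \<Longrightarrow> (\<Gamma> @ [\<psi>, \<phi>], \<chi>) \<in> NOM H"
| conjI: "(\<Gamma>, \<phi>) \<in> NOM H \<Longrightarrow> (\<Gamma>, \<psi>) \<in> NOM H \<Longrightarrow> (\<Gamma>, Conj \<phi> \<psi>) \<in> NOM H"
| conjE1: "(\<Gamma>, Conj \<phi> \<psi>) \<in> NOM H \<Longrightarrow> (\<Gamma>, \<phi>) \<in> NOM H"
| conjE2: "(\<Gamma>, Conj \<phi> \<psi>) \<in> NOM H \<Longrightarrow> (\<Gamma>, \<psi>) \<in> NOM H"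
| impI: "(\<Gamma> @ [\<phi>], \<psi>) \<in> NOM H \<Longrightarrow> (\<Gamma>, Imp \<phi> \<psi>) \<in> NOM H"
| impE: "(\<Gamma>, Imp \<phi> \<psi>) \<in> NOM H \<Longrightarrow> (\<Gamma> @ [\<phi>], \<psi>) \<in> NOM H"
| excluded_middle: "(\<Gamma> @ [\<phi>], \<psi>) \<in> NOM H \<Longrightarrow> (\<Gamma> @ [Neg \<phi>], \<psi>) \<in> NOM H \<Longrightarrow> (\<Gamma>, \<psi>) \<in> NOM H"
| explosion: "(\<Gamma>, Neg \<phi>) \<in> NOM H \<Longrightarrow> (\<Gamma> @ [\<phi>], \<psi>) \<in> NOM H"

definition derivable_inst :: "'a sequent set \<Rightarrow> 'a sequent \<Rightarrow> bool" where
  "derivable_inst P c \<longleftrightarrow> c \<in> NOM P"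

definition compat :: "'a form \<Rightarrow> 'a form \<Rightarrow> 'a form" where
  "compat \<phi> \<psi> = Conj (Imp \<phi> (Imp \<psi> \<phi>)) (Imp \<psi> (Imp \<phi> \<psi>))"

end

theory Submission
  imports Defs
begin

text \<open>The formula \<open>compat \<phi> \<psi>\<close> internalises the two side conditions of compatible
exchange: it is introduced by \<open>\<rightarrow>\<close>-intro and \<open>\<and>\<close>-intro and used via \<open>\<and>\<close>-elim and
\<open>\<rightarrow>\<close>-elim. To exchange \<open>\<phi>, \<psi>\<close> below a trailing context \<open>\<Delta>\<close>, move \<open>\<Delta>\<close> into the
succedent with \<open>\<rightarrow>\<close>-intro, apply compatible exchange, and move \<open>\<Delta>\<close> back with \<open>\<rightarrow>\<close>-elim.\<close>

fun imps :: "'a form list \<Rightarrow> 'a form \<Rightarrow> 'a form" where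
  "imps [] c = c"
| "imps (d # ds) c = Imp d (imps ds c)"

lemma NOM_imps_intro: "(G @ D, c) \<in> NOM H \<Longrightarrow> (G, imps D c) \<in> NOM H"
proof (induction D arbitrary: G)
  case Nil
  then show ?case by simp
next
  case (Cons d ds)
  then have "(G @ [d], imps ds c) \<in> NOM H" by simp
  then show ?case by (simp add: NOM.impI)
qed

lemma NOM_imps_elim: "(G, imps D c) \<in> NOM H \<Longrightarrow> (G @ D, c) \<in> NOM H"
proof (induction D arbitrary: G)
  case Nil
  then show ?case by simp
next
  case (Cons d ds)
  then have "(G @ [d], imps ds c) \<in> NOM H" by (simp add: NOM.impE)
  then show ?case using Cons.IH[of "G @ [d]"] by simp
qed

lemma NOM_compat_exch_context:
  assumes "(G @ [p, q], p) \<in> NOM H" and "(G @ [q, p], q) \<in> NOM H"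
    and "(G @ [p, q] @ D, c) \<in> NOM H"
  shows "(G @ [q, p] @ D, c) \<in> NOM H"
proof -
  have "(G @ [p, q], imps D c) \<in> NOM H"
    using NOM_imps_intro[of "G @ [p, q]"] assms(3) by simp
  then have "(G @ [q, p], imps D c) \<in> NOM H"
    by (rule NOM.compat_exch[OF assms(1) _ assms(2)])
  then show ?thesis
    using NOM_imps_elim[of "G @ [q, p]"] by simp
qed

lemma NOM_compatI:
  assumes "(G @ [p, q], p) \<in> NOM H" and "(G @ [q, p], q) \<in> NOM H"
  shows "(G, compat p q) \<in> NOM H"
  unfolding compat_def
  using assms by (intro NOM.conjI NOM.impI) simp_all

lemma NOM_compatD:
  assumes "(G, compat p q) \<in> NOM H"
  shows "(G @ [p, q], p) \<in> NOM H" and "(G @ [q, p], q) \<in> NOM H"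
proof -
  have "(G, Imp p (Imp q p)) \<in> NOM H"
    using assms unfolding compat_def by (rule NOM.conjE1)
  then have "((G @ [p]) @ [q], p) \<in> NOM H" by (intro NOM.impE)
  then show "(G @ [p, q], p) \<in> NOM H" by simp
  have "(G, Imp q (Imp p q)) \<in> NOM H"
    using assms unfolding compat_def by (rule NOM.conjE2)
  then have "((G @ [q]) @ [p], q) \<in> NOM H" by (intro NOM.impE)
  then show "(G @ [q, p], q) \<in> NOM H" by simp
qed

theorem proposition4p7:
  fixes \<Gamma> \<Delta> :: "'a form list" and \<phi> \<psi> \<chi> :: "'a form"
  shows "derivable_inst {(\<Gamma> @ [\<phi>, \<psi>], \<phi>), (\<Gamma> @ [\<psi>, \<phi>], \<psi>)} (\<Gamma>, compat \<phi> \<psi>)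
       \<and> derivable_inst {(\<Gamma>, compat \<phi> \<psi>), (\<Gamma> @ [\<phi>, \<psi>] @ \<Delta>, \<chi>)} (\<Gamma> @ [\<psi>, \<phi>] @ \<Delta>, \<chi>)
       \<and> derivable_inst {(\<Gamma>, compat \<phi> \<psi>), (\<Gamma> @ [\<psi>, \<phi>] @ \<Delta>, \<chi>)} (\<Gamma> @ [\<phi>, \<psi>] @ \<Delta>, \<chi>)"
  unfolding derivable_inst_def
proof (intro HOL.conjI)
  show "(\<Gamma>, compat \<phi> \<psi>) \<in> NOM {(\<Gamma> @ [\<phi>, \<psi>], \<phi>), (\<Gamma> @ [\<psi>, \<phi>], \<psi>)}"
    by (intro NOM_compatI NOM.hyp) simp_all
next
  let ?H = "{(\<Gamma>, compat \<phi> \<psi>), (\<Gamma> @ [\<phi>, \<psi>] @ \<Delta>, \<chi>)}"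
  have "(\<Gamma>, compat \<phi> \<psi>) \<in> NOM ?H" "(\<Gamma> @ [\<phi>, \<psi>] @ \<Delta>, \<chi>) \<in> NOM ?H"
    by (simp_all add: NOM.hyp)
  then show "(\<Gamma> @ [\<psi>, \<phi>] @ \<Delta>, \<chi>) \<in> NOM ?H"
    using NOM_compat_exch_context NOM_compatD by blast
next
  let ?H = "{(\<Gamma>, compat \<phi> \<psi>), (\<Gamma> @ [\<psi>, \<phi>] @ \<Delta>, \<chi>)}"
  have "(\<Gamma>, compat \<phi> \<psi>) \<in> NOM ?H" "(\<Gamma> @ [\<psi>, \<phi>] @ \<Delta>, \<chi>) \<in> NOM ?H"
    by (simp_all add: NOM.hyp)
  then show "(\<Gamma> @ [\<phi>, \<psi>] @ \<Delta>, \<chi>) \<in> NOM ?H"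
    using NOM_compat_exch_context NOM_compatD by blast
qed

end
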